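(* Let $W=x_1^{a_1}x_2+x_2^{a_2}x_3+\dots+x_{N-1}^{a_{N-1}}x_N+x_N^{a_N}$ be a chain with all $a_i\ge2$ and $a_N>2$. For $1\le i\le N$ and an integer $c\in[-2,2]$ put $Y_{i,c}=q_i+c\,\rho^{(i)}_N$. Then $Y_{i,c}\in(0,1)$ except in the following cases: $Y_{N,-2}\in(-1,0)$; $Y_{N,-1}=0$; and, when $a_N=3$, $Y_{N-1,2}=0$ and $Y_{N,2}=1$.
   Context: $q_i$ is the weight of $x_i$ in $W$ and $\rho^{(i)}_j$ is the $(i,j)$ entry of $E_W^{-1}$, where $E_W$ is the exponent matrix (upper bidiagonal with diagonal $a_1,\dots,a_N$ and superdiagonal entries $1$). Explicitly $\rho^{(i)}_j=(-1)^{j-i}\prod_{k=i}^j a_k^{-1}$ for $j\ge i$, $0$ for $j<i$, and $q_i=\sum_{j=i}^N(-1)^{j-i}\prod_{k=i}^ja_k^{-1}$. *)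

theory Defs
  imports Complex_Main
begin

text \<open>Chain polynomial with exponents a 1, ..., a N.
  rho a i j is the (i,j) entry of the inverse exponent matrix,
  q a N i is the weight of x_i, Y a N i c = q_i + c * rho^(i)_N.\<close>

definition rho :: "(nat \<Rightarrow> nat) \<Rightarrow> nat \<Rightarrow> nat \<Rightarrow> real" where
  "rho a i j = (if i \<le> j then (-1) ^ (j - i) * (\<Prod>k\<in>{i..j}. 1 / real (a k)) else 0)"

definition wt :: "(nat \<Rightarrow> nat) \<Rightarrow> nat \<Rightarrow> nat \<Rightarrow> real" where
  "wt a N i = (\<Sum>j\<in>{i..N}. rho a i j)"

definition Y :: "(nat \<Rightarrow> nat) \<Rightarrow> nat \<Rightarrow> nat \<Rightarrow> int \<Rightarrow> real" where
  "Y a N i c = wt a N i + real_of_int c * rho a i N"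

end

theory Submission
  imports Defs
begin

text \<open>Expanding the first row of the inverse exponent matrix gives the backward recursion
  \<open>Y\<^sub>i = (1 - Y\<^sub>i\<^sub>+\<^sub>1) / a\<^sub>i\<close> with \<open>Y\<^sub>N = (1 + c) / a\<^sub>N\<close>. Since \<open>a\<^sub>i \<ge> 2\<close>, the map
  \<open>y \<mapsto> (1 - y) / a\<^sub>i\<close> sends \<open>(-1, 1)\<close> into \<open>(0, 1)\<close>, so once some \<open>Y\<^sub>m\<close> lies in \<open>(-1, 1)\<close>
  every \<open>Y\<^sub>i\<close> with \<open>i < m\<close> lies in \<open>(0, 1)\<close>. The start value \<open>Y\<^sub>N\<close> lies in \<open>(-1, 1)\<close>
  except for \<open>c = 2, a\<^sub>N = 3\<close>, where \<open>Y\<^sub>N = 1\<close> but already \<open>Y\<^sub>N\<^sub>-\<^sub>1 = 0\<close>.\<close>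

lemma rho_recurrence:
  assumes "i < j"
  shows "rho a i j = - rho a (Suc i) j / real (a i)"
proof -
  have "(\<Prod>k\<in>{i..j}. 1 / real (a k)) = 1 / real (a i) * (\<Prod>k\<in>{Suc i..j}. 1 / real (a k))"
    using assms by (simp add: Icc_eq_insert_lb_nat)
  moreover have "(-1::real) ^ (j - i) = - ((-1) ^ (j - Suc i))"
    using assms by (simp flip: Suc_diff_Suc)
  ultimately show ?thesis
    using assms by (simp add: rho_def)
qed

lemma wt_recurrence:
  assumes "i < N"
  shows "wt a N i = (1 - wt a N (Suc i)) / real (a i)"
proof -
  have "wt a N i = rho a i i + (\<Sum>j\<in>{Suc i..N}. rho a i j)"
    unfolding wt_def using assms by (simp add: Icc_eq_insert_lb_nat)
  also have "(\<Sum>j\<in>{Suc i..N}. rho a i j) = (\<Sum>j\<in>{Suc i..N}. - rho a (Suc i) j / real (a i))"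
    by (rule sum.cong) (simp_all add: rho_recurrence)
  also have "\<dots> = - wt a N (Suc i) / real (a i)"
    unfolding wt_def by (simp add: sum_negf sum_divide_distrib)
  finally show ?thesis
    by (simp add: rho_def diff_divide_distrib)
qed

lemma Y_recurrence:
  assumes "i < N"
  shows "Y a N i c = (1 - Y a N (Suc i) c) / real (a i)"
  unfolding Y_def wt_recurrence[OF assms] rho_recurrence[OF assms]
  by (simp add: diff_divide_distrib add_divide_distrib)

lemma Y_last: "Y a N N c = (1 + real_of_int c) / real (a N)"
  by (simp add: Y_def wt_def rho_def add_divide_distrib)

lemma divide_one_minus_in_unit_interval:
  fixes y b :: real
  assumes "2 \<le> b" "-1 < y" "y < 1"
  shows "0 < (1 - y) / b \<and> (1 - y) / b < 1"
  using assms by (simp add: field_simps)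

lemma Y_in_unit_interval_below:
  assumes "\<forall>k\<in>{i..<m}. a k \<ge> 2" "m \<le> N" "-1 < Y a N m c" "Y a N m c < 1" "i < m"
  shows "0 < Y a N i c \<and> Y a N i c < 1"
proof -
  have "i \<le> m" using \<open>i < m\<close> by simp
  then have "i < m \<longrightarrow> 0 < Y a N i c \<and> Y a N i c < 1"
  proof (induction rule: inc_induct)
    case base
    then show ?case by simp
  next
    case (step n)
    have "-1 < Y a N (Suc n) c \<and> Y a N (Suc n) c < 1"
      using step.IH step.hyps assms(3,4) by (cases "Suc n = m") auto
    moreover have "a n \<ge> 2"
      using assms(1) step.hyps by simp
    ultimately show ?case
      using Y_recurrence[of n N a c] divide_one_minus_in_unit_interval[of "real (a n)"]
        step.hyps assms(2)
      by simp
  qed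
  then show ?thesis using \<open>i < m\<close> by simp
qed

lemma Y_last_pos:
  assumes "0 < a N" "0 \<le> c"
  shows "0 < Y a N N c"
  using assms by (simp add: Y_last add_nonneg_pos)

lemma Y_penultimate_eq_zero:
  assumes "0 < N" "0 < a N" "int (a N) = c + 1"
  shows "Y a N (N - 1) c = 0"
  using Y_recurrence[of "N - 1" N a c] assms by (simp add: Y_last)

lemma Y_last_in_open_interval:
  assumes "a N > 2" "c \<in> {-2..2}" "\<not> (a N = 3 \<and> c = 2)"
  shows "-1 < Y a N N c \<and> Y a N N c < 1"
proof -
  have "c \<le> 1 \<or> real (a N) \<ge> 4"
    using assms by auto
  then show ?thesis
    using assms by (auto simp: Y_last field_simps)
qed

theorem lemma5p3:
  fixes a :: "nat \<Rightarrow> nat" and N :: nat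
  assumes "N \<ge> 1"
    and "\<forall>k\<in>{1..N}. a k \<ge> 2"
    and "a N > 2"
  shows "(\<forall>i\<in>{1..N}. \<forall>c\<in>{-2..2::int}.
            \<not> (i = N \<and> c = -2) \<and> \<not> (i = N \<and> c = -1)
            \<and> \<not> (a N = 3 \<and> i + 1 = N \<and> c = 2) \<and> \<not> (a N = 3 \<and> i = N \<and> c = 2)
            \<longrightarrow> 0 < Y a N i c \<and> Y a N i c < 1)
       \<and> (-1 < Y a N N (-2) \<and> Y a N N (-2) < 0)
       \<and> Y a N N (-1) = 0
       \<and> (a N = 3 \<longrightarrow> (N \<ge> 2 \<longrightarrow> Y a N (N - 1) 2 = 0) \<and> Y a N N 2 = 1)"
proof -
  have penultimate: "Y a N (N - 1) 2 = 0" if "a N = 3"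
    using Y_penultimate_eq_zero assms(1) that by simp
  have interior: "0 < Y a N i c \<and> Y a N i c < 1"
    if "i \<in> {1..N}" "c \<in> {-2..2}" "\<not> (i = N \<and> c = -2)" "\<not> (i = N \<and> c = -1)"
      "\<not> (a N = 3 \<and> i + 1 = N \<and> c = 2)" "\<not> (a N = 3 \<and> i = N \<and> c = 2)" for i c
  proof (cases "a N = 3 \<and> c = 2")
    case True
    with that have "i < N - 1"
      by auto
    moreover have "\<forall>k\<in>{i..<N - 1}. a k \<ge> 2"
      using assms(2) that(1) by auto
    ultimately show ?thesis
      using Y_in_unit_interval_below[of i "N - 1" a N c] penultimate True by auto
  next
    case False
    with assms(3) that(2) have "-1 < Y a N N c \<and> Y a N N c < 1"
      by (rule Y_last_in_open_interval)
    moreover have "\<forall>k\<in>{i..<N}. a k \<ge> 2"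
      using assms(2) that(1) by auto
    moreover have "0 \<le> c" if "i = N"
      using that(1) \<open>c \<in> {-2..2}\<close> \<open>\<not> (i = N \<and> c = -2)\<close> \<open>\<not> (i = N \<and> c = -1)\<close>
      by auto
    ultimately show ?thesis
      using Y_in_unit_interval_below[of i N a N c] Y_last_pos[of a N c] assms(3) \<open>i \<in> {1..N}\<close>
      by (cases "i = N") auto
  qed
  moreover have "-1 < Y a N N (-2) \<and> Y a N N (-2) < 0" "Y a N N (-1) = 0"
    using assms(3) by (simp_all add: Y_last field_simps)
  moreover have "Y a N N 2 = 1" if "a N = 3"
    using that by (simp add: Y_last)
  ultimately show ?thesis
    using penultimate by blast
qed

end
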